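(* Let $\rho_0,\rho_1\in\mathcal{P}(\mathbb{R}^n)\cap L^\infty(\mathbb{R}^n)$ both be radially decreasing, and let $\{\rho_t\}_{t\in[0,1]}$ be the height-function interpolation curve between them. Then for $m\geq2$ the function $t\mapsto\mathcal{S}[\rho_t]=\frac{1}{m-1}\int_{\mathbb{R}^n}\rho_t^m\,dx$ is convex on $(0,1)$.
   Context: Radially decreasing = radially symmetric about the origin and nonincreasing in $|x|$. For a radially decreasing $\rho\in\mathcal{P}\cap L^\infty$, its height function $h:(0,1)\to(0,\|\rho\|_\infty)$ is defined by $\int_{\mathbb{R}^n}\min\{\rho(x),h(s)\}dx=s$. Interpolation curve: with $h_0,h_1$ the height functions of $\rho_0,\rho_1$, set $h_t=(1-t)h_0+th_1$ and $\rho_t(x)=\int_0^1\chi_{(c_nh_t'(s))^{-1/n}}(x)\,h_t'(s)\,ds$, where $c_n$ is the volume of the unit ball in $\mathbb{R}^n$ and $\chi_r=1_{B(0,r)}$. *)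

theory Defs
  imports "HOL-Analysis.Analysis" "HOL-Probability.Essential_Supremum"
begin

definition radially_decreasing :: "('a::euclidean_space \<Rightarrow> real) \<Rightarrow> bool" where
  "radially_decreasing \<rho> \<longleftrightarrow>
     (\<forall>x y. norm x = norm y \<longrightarrow> \<rho> x = \<rho> y) \<and>
     (\<forall>x y. norm x \<le> norm y \<longrightarrow> \<rho> y \<le> \<rho> x)"

definition prob_density_Linf :: "('a::euclidean_space \<Rightarrow> real) \<Rightarrow> bool" where
  "prob_density_Linf \<rho> \<longleftrightarrow>
     \<rho> \<in> borel_measurable lebesgue \<and> (\<forall>x. 0 \<le> \<rho> x) \<and>
     integrable lebesgue \<rho> \<and> (\<integral>x. \<rho> x \<partial>lebesgue) = 1 \<and>
     (\<exists>M. AE x in lebesgue. \<bar>\<rho> x\<bar> \<le> M)"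

definition Linf_norm :: "('a::euclidean_space \<Rightarrow> real) \<Rightarrow> ereal" where
  "Linf_norm \<rho> = esssup lebesgue (\<lambda>x. ereal \<bar>\<rho> x\<bar>)"

definition is_height_function :: "('a::euclidean_space \<Rightarrow> real) \<Rightarrow> (real \<Rightarrow> real) \<Rightarrow> bool" where
  "is_height_function \<rho> h \<longleftrightarrow>
     (\<forall>s\<in>{0<..<1}. 0 < h s \<and> ereal (h s) < Linf_norm \<rho> \<and>
        (\<integral>x. min (\<rho> x) (h s) \<partial>lebesgue) = s)"

definition unit_ball_volume :: "'a::euclidean_space itself \<Rightarrow> real" where
  "unit_ball_volume _ = measure lebesgue (ball (0::'a) 1)"

definition interp_curve :: "(real \<Rightarrow> real) \<Rightarrow> (real \<Rightarrow> real) \<Rightarrow> real \<Rightarrow> 'a::euclidean_space \<Rightarrow> real" where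
  "interp_curve h0 h1 t x =
     (let ht = (\<lambda>s. (1 - t) * h0 s + t * h1 s)
      in LINT s:{0<..<1}|lborel.
           indicator (ball (0::'a) ((unit_ball_volume TYPE('a) * deriv ht s) powr (- 1 / real DIM('a)))) x
           * deriv ht s)"

definition S_functional :: "real \<Rightarrow> ('a::euclidean_space \<Rightarrow> real) \<Rightarrow> real" where
  "S_functional m \<rho> = 1 / (m - 1) * (\<integral>x. (\<rho> x) powr m \<partial>lebesgue)"

end

theory Submission
  imports Defs
begin

(* The curve stacks, for every mass level s, the uniform density h_t'(s) on the ball of mass one,
   where h_t = (1 - t) h_0 + t h_1.  Height functions are positive, bounded, strictly increasing and
   convex (the map y |-> int min(rho, y) dx is concave), and so is h_t.  A convex function has a
   monotone right derivative, which is its derivative off a countable set and integrates back to it.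
   For fixed x the levels whose ball contains x form an interval (0, sigma), because the radii
   decrease with s; hence rho_t(x) = h_t(sigma-) and rho_t(x)^m is the integral of (h_t^m)' over
   (0, sigma).  Integrating in x with Tonelli replaces every ball by its volume 1/h_t'(s), so
       S[rho_t] = m/(m-1) * int_0^1 h_t(s)^(m-1) ds,
   which is convex in t since h_t is affine in t and x^(m-1) is convex for m >= 2. *)

section \<open>Real-analysis preliminaries\<close>

lemma eq_if_increments_bounded_by_oscillation:
  fixes \<Phi> R :: "real \<Rightarrow> real"
  assumes "a \<le> b"
    and incr: "\<And>s u. a \<le> s \<Longrightarrow> s \<le> u \<Longrightarrow> u \<le> b \<Longrightarrow> \<bar>\<Phi> u - \<Phi> s\<bar> \<le> (R u - R s) * (u - s)"
  shows "\<Phi> b = \<Phi> a"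
proof -
  have bound: "\<bar>\<Phi> b - \<Phi> a\<bar> \<le> (R b - R a) * (b - a) / real K" if "K > 0" for K :: nat
  proof -
    define d where "d = (b - a) / real K"
    define x where "x k = a + real k * d" for k
    have x_ends: "x 0 = a" "x K = b" using \<open>K > 0\<close> by (simp_all add: x_def d_def)
    have x_in: "a \<le> x k" "x k \<le> x (Suc k)" "x (Suc k) \<le> b" if "k < K" for k
    proof -
      have "0 \<le> d" using \<open>a \<le> b\<close> by (simp add: d_def)
      moreover have "real (Suc k) * d \<le> real K * d" using that \<open>0 \<le> d\<close> by (intro mult_right_mono) auto
      ultimately show "a \<le> x k" "x k \<le> x (Suc k)" "x (Suc k) \<le> b"
        using x_ends by (auto simp: x_def algebra_simps)
    qed
    have "\<bar>\<Phi> b - \<Phi> a\<bar> = \<bar>\<Sum>k<K. \<Phi> (x (Suc k)) - \<Phi> (x k)\<bar>"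
      by (simp add: sum_lessThan_telescope[of "\<lambda>k. \<Phi> (x k)"] x_ends)
    also have "\<dots> \<le> (\<Sum>k<K. \<bar>\<Phi> (x (Suc k)) - \<Phi> (x k)\<bar>)"
      by (rule sum_abs)
    also have "\<dots> \<le> (\<Sum>k<K. (R (x (Suc k)) - R (x k)) * d)"
    proof (intro sum_mono)
      fix k assume "k \<in> {..<K}"
      moreover have "x (Suc k) - x k = d" by (simp add: x_def algebra_simps)
      ultimately show "\<bar>\<Phi> (x (Suc k)) - \<Phi> (x k)\<bar> \<le> (R (x (Suc k)) - R (x k)) * d"
        using incr[OF x_in] by auto
    qed
    also have "\<dots> = (R b - R a) * d"
      by (simp add: sum_distrib_right[symmetric] sum_lessThan_telescope[of "\<lambda>k. R (x k)"] x_ends)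
    finally show ?thesis by (simp add: d_def)
  qed
  have "(\<lambda>K. (R b - R a) * (b - a) / real K) \<longlonglongrightarrow> 0"
    by (rule lim_const_over_n)
  moreover have "\<forall>\<^sub>F K in sequentially. \<bar>\<Phi> b - \<Phi> a\<bar> \<le> (R b - R a) * (b - a) / real K"
    using eventually_gt_at_top[of 0] by eventually_elim (rule bound)
  ultimately have "\<bar>\<Phi> b - \<Phi> a\<bar> \<le> 0"
    by (intro tendsto_le[OF trivial_limit_sequentially _ tendsto_const])
  then show ?thesis by simp
qed

lemma has_integral_of_increment_bounds:
  fixes F R :: "real \<Rightarrow> real"
  assumes "a \<le> b"
    and incr: "\<And>s u. a \<le> s \<Longrightarrow> s \<le> u \<Longrightarrow> u \<le> b \<Longrightarrow>
      R s * (u - s) \<le> F u - F s \<and> F u - F s \<le> R u * (u - s)"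
  shows "(R has_integral F b - F a) {a..b}"
proof -
  have "R s \<le> R u" if "a \<le> s" "s < u" "u \<le> b" for s u
  proof -
    have "R s * (u - s) \<le> R u * (u - s)" using incr[of s u] that by linarith
    then show ?thesis using \<open>s < u\<close> by simp
  qed
  then have "mono_on {a..b} R"
    by (intro mono_onI) (auto simp: order_le_less)
  then have integrable: "R integrable_on {s..u}" if "a \<le> s" "u \<le> b" for s u
    using that by (intro integrable_on_mono_on) (auto elim!: mono_on_subset)
  define \<Phi> where "\<Phi> y = integral {a..y} R - (F y - F a)" for y
  have "\<bar>\<Phi> u - \<Phi> s\<bar> \<le> (R u - R s) * (u - s)" if su: "a \<le> s" "s \<le> u" "u \<le> b" for s u
  proof -
    have "integral {a..s} R + integral {s..u} R = integral {a..u} R"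
      using su integrable[of a u] by (intro Henstock_Kurzweil_Integration.integral_combine) auto
    then have "\<Phi> u - \<Phi> s = integral {s..u} R - (F u - F s)"
      by (simp add: \<Phi>_def)
    moreover have "integral {s..u} (\<lambda>_. R s) \<le> integral {s..u} R"
      and "integral {s..u} R \<le> integral {s..u} (\<lambda>_. R u)"
      using su integrable \<open>mono_on {a..b} R\<close>
      by (intro integral_le; force intro: mono_onD)+
    ultimately show ?thesis
      using incr[OF su] su unfolding abs_le_iff by (simp add: algebra_simps)
  qed
  then have "\<Phi> b = \<Phi> a"
    by (rule eq_if_increments_bounded_by_oscillation[OF \<open>a \<le> b\<close>])
  then show ?thesis
    using integrable[of a b] by (simp add: \<Phi>_def has_integral_integrable_integral)
qed

lemma tendsto_at_left_SUP_mono_on: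
  fixes F :: "real \<Rightarrow> real"
  assumes "a < b" and mono: "mono_on {a<..<b} F" and bdd: "bdd_above (F ` {a<..<b})"
  shows "(F \<longlongrightarrow> (SUP s\<in>{a<..<b}. F s)) (at_left b)"
proof (rule order_tendstoI)
  fix y assume "y < (SUP s\<in>{a<..<b}. F s)"
  then obtain s where s: "a < s" "s < b" "y < F s"
    using less_cSUP_iff[OF _ bdd] \<open>a < b\<close> by auto
  have "\<forall>\<^sub>F x in at_left b. x \<in> {s<..<b}"
    by (rule eventually_at_left_real) fact
  then show "\<forall>\<^sub>F x in at_left b. y < F x"
  proof eventually_elim
    case (elim x)
    then have "F s \<le> F x" using s by (intro mono_onD[OF mono]) auto
    then show ?case using s by simp
  qed
next
  fix y assume "(SUP s\<in>{a<..<b}. F s) < y"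
  moreover have "\<forall>\<^sub>F x in at_left b. x \<in> {a<..<b}"
    by (rule eventually_at_left_real) fact
  ultimately show "\<forall>\<^sub>F x in at_left b. F x < y"
    by (elim eventually_mono) (use cSUP_upper[OF _ bdd] in fastforce)
qed

lemma tendsto_at_right_INF_mono_on:
  fixes F :: "real \<Rightarrow> real"
  assumes "a < b" and mono: "mono_on {a<..<b} F" and bdd: "bdd_below (F ` {a<..<b})"
  shows "(F \<longlongrightarrow> (INF s\<in>{a<..<b}. F s)) (at_right a)"
proof (rule order_tendstoI)
  fix y assume "(INF s\<in>{a<..<b}. F s) < y"
  then obtain s where s: "a < s" "s < b" "F s < y"
    using cINF_less_iff[OF _ bdd] \<open>a < b\<close> by auto
  have "\<forall>\<^sub>F x in at_right a. x \<in> {a<..<s}"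
    by (rule eventually_at_right_real) fact
  then show "\<forall>\<^sub>F x in at_right a. F x < y"
  proof eventually_elim
    case (elim x)
    then have "F x \<le> F s" using s by (intro mono_onD[OF mono]) auto
    then show ?case using s by simp
  qed
next
  fix y assume "y < (INF s\<in>{a<..<b}. F s)"
  moreover have "\<forall>\<^sub>F x in at_right a. x \<in> {a<..<b}"
    by (rule eventually_at_right_real) fact
  ultimately show "\<forall>\<^sub>F x in at_right a. y < F x"
    by (elim eventually_mono) (use cINF_lower[OF bdd] in fastforce)
qed

lemma nn_integral_Ioo_FTC:
  fixes f F :: "real \<Rightarrow> real"
  assumes "a < b"
    and f_meas: "f \<in> borel_measurable (restrict_space borel {a<..<b})" and f_nonneg: "\<And>s. a < s \<Longrightarrow> s < b \<Longrightarrow> 0 \<le> f s"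
    and FTC: "\<And>u v. a < u \<Longrightarrow> u \<le> v \<Longrightarrow> v < b \<Longrightarrow> (f has_integral F v - F u) {u..v}"
    and A: "(F \<longlongrightarrow> A) (at_right a)" and B: "(F \<longlongrightarrow> B) (at_left b)"
  shows "(\<integral>\<^sup>+s. ennreal (f s) * indicator {a<..<b} s \<partial>lborel) = ennreal (B - A)"
proof -
  obtain u l :: "nat \<Rightarrow> real" where approx:
    "{a<..<b} = (\<Union>i. {l i..u i})" "incseq u" "decseq l" "\<And>i. l i < u i" "\<And>i. a < l i" "\<And>i. u i < b"
    "l \<longlonglongrightarrow> a" "u \<longlonglongrightarrow> b"
    by (rule einterval_Icc_approximation[of "ereal a" "ereal b"]) (use \<open>a < b\<close> that in auto)
  have incseq: "incseq (\<lambda>i. {l i..u i})"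
    using approx(2,3) by (auto simp: incseq_def decseq_def intro: order_trans)
  have lim: "(\<lambda>i. \<integral>\<^sup>+s. ennreal (f s) * indicator {l i..u i} s \<partial>lborel)
      \<longlonglongrightarrow> (\<integral>\<^sup>+s. ennreal (f s) * indicator {a<..<b} s \<partial>lborel)"
  proof (rule nn_integral_LIMSEQ)
    show "incseq (\<lambda>i s. ennreal (f s) * indicator {l i..u i} s)"
    proof (intro monoI le_funI)
      fix i j :: nat and s assume "i \<le> j"
      with incseq have "{l i..u i} \<subseteq> {l j..u j}" by (rule monoD)
      then show "ennreal (f s) * indicator {l i..u i} s \<le> ennreal (f s) * indicator {l j..u j} s"
        by (auto split: split_indicator)
    qed
    show "(\<lambda>i. ennreal (f s) * indicator {l i..u i} s) \<longlonglongrightarrow> ennreal (f s) * indicator {a<..<b} s" for s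
      unfolding approx(1) by (intro ennreal_tendsto_cmult LIMSEQ_indicator_incseq incseq) simp
    show "(\<lambda>s. ennreal (f s) * indicator {l i..u i} s) \<in> borel_measurable lborel" for i
    proof -
      have "{l i..u i} \<subseteq> {a<..<b}" using approx(5,6)[of i] by auto
      then have "f \<in> borel_measurable (restrict_space borel {l i..u i})"
        by (rule measurable_restrict_mono[OF f_meas])
      then show ?thesis
        by (simp add: borel_measurable_restrict_space_iff_ennreal[symmetric])
    qed
  qed
  have FTC_i: "(\<integral>\<^sup>+s. ennreal (f s) * indicator {l i..u i} s \<partial>lborel) = ennreal (F (u i) - F (l i))" for i
  proof (rule nn_integral_has_integral_lebesgue')
    show "(f has_integral F (u i) - F (l i)) {l i..u i}"
      using approx(4-6)[of i] by (intro FTC) auto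
    show "0 \<le> f s" if "s \<in> {l i..u i}" for s
      using approx(5,6)[of i] that by (intro f_nonneg) auto
  qed
  have "(\<lambda>i. F (u i) - F (l i)) \<longlonglongrightarrow> B - A"
  proof (intro tendsto_diff filterlim_compose[OF B] filterlim_compose[OF A])
    show "filterlim u (at_left b) sequentially"
      using approx by (intro tendsto_imp_filterlim_at_left) (auto intro: always_eventually)
    show "filterlim l (at_right a) sequentially"
      using approx by (intro tendsto_imp_filterlim_at_right) (auto intro: always_eventually)
  qed
  then have "(\<lambda>i. \<integral>\<^sup>+s. ennreal (f s) * indicator {l i..u i} s \<partial>lborel) \<longlonglongrightarrow> ennreal (B - A)"
    unfolding FTC_i by (rule tendsto_ennrealI)
  with lim show ?thesis
    by (rule LIMSEQ_unique)
qed

lemma powr_increment_bounds: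
  fixes x y p :: real
  assumes "0 < x" "x \<le> y" "1 \<le> p"
  shows "p * x powr (p - 1) * (y - x) \<le> y powr p - x powr p
    \<and> y powr p - x powr p \<le> p * y powr (p - 1) * (y - x)"
proof (cases "x = y")
  case False
  then have "x < y" using assms by simp
  have deriv: "\<And>z. x \<le> z \<Longrightarrow> z \<le> y \<Longrightarrow> ((\<lambda>z. z powr p) has_real_derivative p * z powr (p - 1)) (at z)"
    using assms by (intro has_real_derivative_powr) auto
  obtain z where z: "x < z" "z < y" "y powr p - x powr p = (y - x) * (p * z powr (p - 1))"
    using MVT2[OF \<open>x < y\<close> deriv] by blast
  have "p * x powr (p - 1) \<le> p * z powr (p - 1)" "p * z powr (p - 1) \<le> p * y powr (p - 1)"
    using z assms by (auto intro!: mult_left_mono powr_mono2)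
  then show ?thesis
    using z \<open>x < y\<close> by (auto simp: mult.commute intro: mult_right_mono)
qed simp

lemma superlevel_set_antimono_on:
  fixes R :: "real \<Rightarrow> real"
  assumes "a \<le> b" and antimono: "antimono_on {a<..<b} R" and outside: "\<And>s. s \<notin> {a<..<b} \<Longrightarrow> R s \<le> \<nu>"
  obtains \<sigma> where "a \<le> \<sigma>" "\<sigma> \<le> b" "\<And>s. s \<noteq> \<sigma> \<Longrightarrow> \<nu> < R s \<longleftrightarrow> s \<in> {a<..<\<sigma>}"
proof -
  define D where "D = insert a {s\<in>{a<..<b}. \<nu> < R s}"
  have bdd: "bdd_above D"
    unfolding D_def by (rule bdd_aboveI[of _ b]) (use \<open>a \<le> b\<close> in auto)
  have "a \<le> Sup D"
    by (rule cSup_upper[OF _ bdd]) (simp add: D_def)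
  moreover have "Sup D \<le> b"
    using \<open>a \<le> b\<close> by (intro cSup_least) (auto simp: D_def)
  moreover have "\<nu> < R s \<longleftrightarrow> s \<in> {a<..<Sup D}" if "s \<noteq> Sup D" for s
  proof
    assume "\<nu> < R s"
    then have "s \<in> {a<..<b}" using outside by force
    with \<open>\<nu> < R s\<close> have "s \<le> Sup D" by (intro cSup_upper[OF _ bdd]) (auto simp: D_def)
    with \<open>s \<in> {a<..<b}\<close> that show "s \<in> {a<..<Sup D}" by auto
  next
    assume s: "s \<in> {a<..<Sup D}"
    then obtain e where "e \<in> D" "s < e"
      using less_cSupE[of s D] by (auto simp: D_def)
    with s have e: "e \<in> {a<..<b}" "\<nu> < R e"
      by (auto simp: D_def)
    moreover have "R e \<le> R s"
      using e s \<open>s < e\<close> \<open>Sup D \<le> b\<close> by (intro monotone_onD[OF antimono]) auto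
    ultimately show "\<nu> < R s" by simp
  qed
  ultimately show ?thesis by (rule that)
qed

lemma convex_comb_min_le:
  fixes r y z u v :: real
  assumes "0 \<le> u" "0 \<le> v" "u + v = 1"
  shows "u * min r y + v * min r z \<le> min r (u * y + v * z)"
proof -
  have "u * min r y + v * min r z \<le> u * r + v * r" "u * min r y + v * min r z \<le> u * y + v * z"
    using assms by (auto intro!: add_mono mult_left_mono)
  then show ?thesis
    using \<open>u + v = 1\<close> by (simp add: distrib_right[symmetric])
qed

lemma convex_comb_strict_mono:
  fixes a b c d t :: real
  assumes "a < b" "c < d" "0 \<le> t" "t \<le> 1"
  shows "(1 - t) * a + t * c < (1 - t) * b + t * d"
proof (cases "t = 0")
  case False
  with assms have "(1 - t) * a \<le> (1 - t) * b" "t * c < t * d"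
    by (auto intro: mult_left_mono)
  then show ?thesis by simp
qed (simp add: \<open>a < b\<close>)

lemma convex_on_cong:
  assumes "\<And>x. x \<in> S \<Longrightarrow> f x = g x"
  shows "convex_on S f \<longleftrightarrow> convex_on S g"
  using assms by (auto simp: convex_on_def convexD)

lemma convex_on_integral:
  fixes G :: "'b::real_vector \<Rightarrow> 'a \<Rightarrow> real"
  assumes "convex I"
    and integrable: "\<And>t. t \<in> I \<Longrightarrow> integrable M (G t)"
    and convex: "\<And>x. x \<in> space M \<Longrightarrow> convex_on I (\<lambda>t. G t x)"
  shows "convex_on I (\<lambda>t. \<integral>x. G t x \<partial>M)"
proof (rule convex_onI[OF _ \<open>convex I\<close>])
  fix u :: real and t1 t2 assume u: "0 < u" "u < 1" and t: "t1 \<in> I" "t2 \<in> I"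
  then have "(1 - u) *\<^sub>R t1 + u *\<^sub>R t2 \<in> I"
    using \<open>convex I\<close> by (intro convexD) auto
  then have "(\<integral>x. G ((1 - u) *\<^sub>R t1 + u *\<^sub>R t2) x \<partial>M) \<le> (\<integral>x. (1 - u) * G t1 x + u * G t2 x \<partial>M)"
    using t u
    by (intro integral_mono integrable Bochner_Integration.integrable_add integrable_mult_right
        convex_onD[OF convex]) auto
  also have "\<dots> = (1 - u) * (\<integral>x. G t1 x \<partial>M) + u * (\<integral>x. G t2 x \<partial>M)"
    using t by (simp add: integrable)
  finally show "(\<integral>x. G ((1 - u) *\<^sub>R t1 + u *\<^sub>R t2) x \<partial>M)
      \<le> (1 - u) * (\<integral>x. G t1 x \<partial>M) + u * (\<integral>x. G t2 x \<partial>M)" .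
qed

lemma convex_on_powr_affine:
  fixes a b p :: real
  assumes "1 \<le> p" "0 < a" "0 < b"
  shows "convex_on {0..1} (\<lambda>t. ((1 - t) * a + t * b) powr p)"
proof (rule convex_onI)
  define lin where "lin t = (1 - t) * a + t * b" for t
  have pos: "0 < lin t" if "t \<in> {0..1}" for t
    using that assms by (cases "t = 0") (auto simp: lin_def intro: add_nonneg_pos mult_pos_pos)
  fix u t1 t2 :: real assume "0 < u" "u < 1" "t1 \<in> {0..1}" "t2 \<in> {0..1}"
  moreover have "lin ((1 - u) *\<^sub>R t1 + u *\<^sub>R t2) = (1 - u) * lin t1 + u * lin t2"
    by (simp add: lin_def algebra_simps)
  ultimately show "lin ((1 - u) *\<^sub>R t1 + u *\<^sub>R t2) powr p \<le> (1 - u) * lin t1 powr p + u * lin t2 powr p"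
    using convex_onD[OF powr_convex[OF \<open>1 \<le> p\<close>], of u "lin t1" "lin t2"] pos by simp
qed simp

section \<open>One-sided derivatives of convex functions\<close>

locale convex_on_Ioo =
  fixes f :: "real \<Rightarrow> real" and a b :: real
  assumes convex: "convex_on {a<..<b} f"
begin

definition slope :: "real \<Rightarrow> real \<Rightarrow> real"
  where "slope s u = (f u - f s) / (u - s)"

definition right_deriv :: "real \<Rightarrow> real"
  where "right_deriv s = (INF u\<in>{s<..<b}. slope s u)"

definition left_deriv :: "real \<Rightarrow> real"
  where "left_deriv s = (SUP w\<in>{a<..<s}. slope w s)"

lemma slope_commute: "slope s u = slope u s"
  unfolding slope_def by (metis minus_diff_eq minus_divide_divide)

lemma slope_mono:
  assumes "a < x" "x < y" "y < z" "z < b"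
  shows "slope x y \<le> slope x z" and "slope x z \<le> slope y z"
  using convex_on_slope_le[OF convex, of x z y] assms
  by (simp_all add: slope_def slope_commute[unfolded slope_def])

lemma right_slope_mono: "a < s \<Longrightarrow> mono_on {s<..<b} (slope s)"
  by (intro mono_onI) (metis greaterThanLessThan_iff order_le_less slope_mono(1))

lemma left_slope_mono: "s < b \<Longrightarrow> mono_on {a<..<s} (\<lambda>w. slope w s)"
  by (intro mono_onI) (metis greaterThanLessThan_iff order_le_less slope_mono(2))

lemma bdd_below_right_slopes:
  assumes "a < s" "s < b"
  shows "bdd_below (slope s ` {s<..<b})"
proof (rule bdd_belowI2)
  fix u assume "u \<in> {s<..<b}"
  then show "slope ((a + s) / 2) s \<le> slope s u"
    using slope_mono[of "(a + s) / 2" s u] assms by auto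
qed

lemma bdd_above_left_slopes:
  assumes "a < s" "s < b"
  shows "bdd_above ((\<lambda>w. slope w s) ` {a<..<s})"
proof (rule bdd_aboveI2)
  fix w assume "w \<in> {a<..<s}"
  then show "slope w s \<le> slope s ((s + b) / 2)"
    using slope_mono[of w s "(s + b) / 2"] assms by auto
qed

lemma right_deriv_le_slope: "a < s \<Longrightarrow> s < u \<Longrightarrow> u < b \<Longrightarrow> right_deriv s \<le> slope s u"
  unfolding right_deriv_def by (rule cINF_lower[OF bdd_below_right_slopes]) auto

lemma slope_le_left_deriv: "a < w \<Longrightarrow> w < s \<Longrightarrow> s < b \<Longrightarrow> slope w s \<le> left_deriv s"
  unfolding left_deriv_def by (rule cSUP_upper[OF _ bdd_above_left_slopes]) auto

lemma left_deriv_le_slope: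
  assumes "a < s" "s < u" "u < b"
  shows "left_deriv s \<le> slope s u"
  unfolding left_deriv_def
proof (rule cSUP_least)
  fix w assume "w \<in> {a<..<s}"
  then show "slope w s \<le> slope s u"
    using slope_mono[of w s u] assms by auto
qed (use assms in auto)

lemma left_deriv_le_right_deriv:
  assumes "a < s" "s < b"
  shows "left_deriv s \<le> right_deriv s"
  unfolding right_deriv_def using assms by (intro cINF_greatest left_deriv_le_slope) auto

lemma right_deriv_le_left_deriv: "a < s \<Longrightarrow> s < u \<Longrightarrow> u < b \<Longrightarrow> right_deriv s \<le> left_deriv u"
  using right_deriv_le_slope slope_le_left_deriv by (meson order_trans)

lemma right_deriv_mono: "mono_on {a<..<b} right_deriv"
  by (intro mono_onI)
    (metis greaterThanLessThan_iff left_deriv_le_right_deriv order_le_less order_trans right_deriv_le_left_deriv)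

lemma increment_bounds:
  assumes "a < s" "s \<le> u" "u < b"
  shows "right_deriv s * (u - s) \<le> f u - f s \<and> f u - f s \<le> right_deriv u * (u - s)"
proof (cases "s = u")
  case False
  then have "s < u" using assms by simp
  have "right_deriv s \<le> slope s u" "slope s u \<le> left_deriv u" "left_deriv u \<le> right_deriv u"
    using assms \<open>s < u\<close> by (auto intro: right_deriv_le_slope slope_le_left_deriv left_deriv_le_right_deriv)
  then have "right_deriv s * (u - s) \<le> slope s u * (u - s)" "slope s u * (u - s) \<le> right_deriv u * (u - s)"
    using \<open>s < u\<close> by (auto intro: mult_right_mono)
  moreover have "slope s u * (u - s) = f u - f s"
    using \<open>s < u\<close> by (simp add: slope_def)
  ultimately show ?thesis by simp
qed simp

lemma has_integral_right_deriv:
  "a < u \<Longrightarrow> u \<le> v \<Longrightarrow> v < b \<Longrightarrow> (right_deriv has_integral f v - f u) {u..v}"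
  using increment_bounds by (intro has_integral_of_increment_bounds) auto

lemma has_real_derivative_right_deriv:
  assumes "a < s" "s < b" and smooth: "left_deriv s = right_deriv s"
  shows "(f has_real_derivative right_deriv s) (at s)"
proof -
  have "(slope s \<longlongrightarrow> right_deriv s) (at_right s)"
    unfolding right_deriv_def using assms
    by (intro tendsto_at_right_INF_mono_on right_slope_mono bdd_below_right_slopes)
  moreover have "(slope s \<longlongrightarrow> right_deriv s) (at_left s)"
  proof -
    have "((\<lambda>w. slope w s) \<longlongrightarrow> left_deriv s) (at_left s)"
      unfolding left_deriv_def using assms
      by (intro tendsto_at_left_SUP_mono_on left_slope_mono bdd_above_left_slopes)
    moreover have "slope s = (\<lambda>w. slope w s)"
      by (rule ext) (rule slope_commute)
    ultimately show ?thesis by (simp add: smooth)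
  qed
  ultimately have "(slope s \<longlongrightarrow> right_deriv s) (at s)"
    using filterlim_split_at by blast
  moreover have "slope s = (\<lambda>u. (f u - f s) / (u - s))"
    by (simp add: slope_def fun_eq_iff)
  ultimately show ?thesis
    by (simp add: has_field_derivative_iff)
qed

definition kinks :: "real set"
  where "kinks = {s\<in>{a<..<b}. left_deriv s \<noteq> right_deriv s}"

lemma countable_kinks: "countable kinks"
proof -
  have "\<exists>q\<in>\<rat>. left_deriv s < q \<and> q < right_deriv s" if "s \<in> kinks" for s
    using that left_deriv_le_right_deriv Rats_dense_in_real by (force simp: kinks_def)
  then obtain q where q: "\<And>s. s \<in> kinks \<Longrightarrow> q s \<in> \<rat> \<and> left_deriv s < q s \<and> q s < right_deriv s"
    by metis
  \<comment> \<open>The open intervals between the one-sided derivatives at distinct kinks are disjoint.\<close>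
  have "inj_on q kinks"
  proof (rule linorder_inj_onI)
    fix s u assume "s < u" "s \<in> kinks" "u \<in> kinks"
    then have "q s < right_deriv s" "right_deriv s \<le> left_deriv u" "left_deriv u < q u"
      using q right_deriv_le_left_deriv by (auto simp: kinks_def)
    then show "q s \<noteq> q u" by simp
  qed auto
  moreover have "q ` kinks \<subseteq> \<rat>"
    using q by auto
  ultimately show ?thesis
    by (metis countable_rat countable_subset countable_image_inj_on)
qed

lemma deriv_eq_right_deriv: "s \<in> {a<..<b} - kinks \<Longrightarrow> deriv f s = right_deriv s"
  using has_real_derivative_right_deriv by (auto simp: kinks_def intro: DERIV_imp_deriv)

end

section \<open>Densities built from height profiles\<close>

text \<open>The radius of the ball on which the constant density \<open>v\<close> has mass one.\<close>

definition unit_mass_radius :: "'a::euclidean_space itself \<Rightarrow> real \<Rightarrow> real"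
  where "unit_mass_radius _ v = (unit_ball_volume TYPE('a) * v) powr (- 1 / real DIM('a))"

definition density_of_height :: "(real \<Rightarrow> real) \<Rightarrow> 'a::euclidean_space \<Rightarrow> real"
  where "density_of_height g x =
    (LINT s:{0<..<1}|lborel. indicator (ball 0 (unit_mass_radius TYPE('a) (deriv g s))) x * deriv g s)"

lemma interp_curve_eq_density_of_height:
  "interp_curve h0 h1 t = density_of_height (\<lambda>s. (1 - t) * h0 s + t * h1 s)"
  by (simp add: fun_eq_iff interp_curve_def density_of_height_def unit_mass_radius_def Let_def)

lemma unit_ball_volume_eq: "unit_ball_volume TYPE('a::euclidean_space) = unit_ball_vol (real DIM('a))"
proof -
  have "measure lborel (ball (0::'a) 1) = unit_ball_vol (real DIM('a))"
    using emeasure_ball[where c = "0::'a" and r = 1] by (simp add: measure_def)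
  then show ?thesis
    by (simp add: unit_ball_volume_def measure_completion)
qed

lemma unit_mass_radius_0 [simp]: "unit_mass_radius TYPE('a::euclidean_space) 0 = 0"
  by (simp add: unit_mass_radius_def)

lemma borel_measurable_unit_mass_radius [measurable]:
  "unit_mass_radius TYPE('a::euclidean_space) \<in> borel_measurable borel"
  unfolding unit_mass_radius_def[abs_def] by measurable

lemma unit_mass_radius_antimono:
  assumes "0 < v" "v \<le> w"
  shows "unit_mass_radius TYPE('a::euclidean_space) w \<le> unit_mass_radius TYPE('a) v"
  unfolding unit_mass_radius_def using assms
  by (intro powr_mono2') (auto simp: unit_ball_volume_eq intro!: mult_left_mono)

lemma emeasure_ball_unit_mass_radius:
  assumes "0 < v"
  shows "emeasure lborel (ball (0::'a::euclidean_space) (unit_mass_radius TYPE('a) v)) = ennreal (1 / v)"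
proof -
  define c where "c = unit_ball_volume TYPE('a)"
  define r where "r = unit_mass_radius TYPE('a) v"
  have "0 < c"
    by (simp add: c_def unit_ball_volume_eq)
  then have "0 < r"
    using assms by (simp add: r_def unit_mass_radius_def c_def[symmetric])
  then have "r ^ DIM('a) = r powr real DIM('a)"
    by (simp add: powr_realpow)
  also have "\<dots> = (c * v) powr (- 1)"
    by (simp add: r_def unit_mass_radius_def c_def powr_powr)
  also have "\<dots> = 1 / (c * v)"
    using \<open>0 < c\<close> assms by (simp add: powr_minus divide_inverse)
  finally have "c * r ^ DIM('a) = 1 / v"
    using \<open>0 < c\<close> by simp
  moreover have "emeasure lborel (ball (0::'a) r) = ennreal (c * r ^ DIM('a))"
    using emeasure_ball[where c = "0::'a" and r = r] \<open>0 < r\<close> by (simp add: c_def unit_ball_volume_eq)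
  ultimately show ?thesis
    by (simp add: r_def)
qed

locale height_profile = convex_on_Ioo f 0 1 for f +
  assumes strict_mono: "strict_mono_on {0<..<1} f"
    and pos: "\<And>s. 0 < s \<Longrightarrow> s < 1 \<Longrightarrow> 0 < f s"
    and bdd: "bdd_above (f ` {0<..<1})"
    and tendsto_0: "(f \<longlongrightarrow> 0) (at_right 0)"
begin

text \<open>The right derivative, extended by zero outside \<open>(0, 1)\<close> so that it is Borel measurable on
  the whole line.\<close>

definition height_deriv :: "real \<Rightarrow> real"
  where "height_deriv s = indicator {0<..<1} s * right_deriv s"

lemma mono_on_Ioo: "mono_on {0<..<1} f"
  by (rule strict_mono_on_imp_mono_on[OF strict_mono])

lemma right_deriv_pos:
  assumes "0 < s" "s < 1"
  shows "0 < right_deriv s"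
proof -
  have "0 < slope (s / 2) s"
    using assms strict_mono_onD[OF strict_mono, of "s / 2" s] by (simp add: slope_def)
  also have "\<dots> \<le> right_deriv s"
    using assms slope_le_left_deriv[of "s / 2" s] left_deriv_le_right_deriv[of s] by simp
  finally show ?thesis .
qed

lemma height_deriv_nonneg: "0 \<le> height_deriv s"
  using right_deriv_pos by (simp add: height_deriv_def indicator_def less_imp_le)

lemma borel_measurable_on_Ioo:
  "f \<in> borel_measurable (restrict_space borel {0<..<1})"
  "right_deriv \<in> borel_measurable (restrict_space borel {0<..<1})"
  using mono_on_Ioo right_deriv_mono by (auto intro: borel_measurable_mono_on_fnc)

lemma borel_measurable_height_deriv [measurable]: "height_deriv \<in> borel_measurable borel"
  using borel_measurable_restrict_space_iff[of "{0<..<1}" borel right_deriv] borel_measurable_on_Ioo(2)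
  by (simp add: height_deriv_def[abs_def])

lemma borel_measurable_indicator_powr [measurable]:
  "(\<lambda>s. indicator {0<..<1} s * f s powr q) \<in> borel_measurable borel"
proof -
  have "(\<lambda>s. f s powr q) \<in> borel_measurable (restrict_space borel {0<..<1})"
    using borel_measurable_on_Ioo by measurable
  then show ?thesis
    by (simp add: borel_measurable_restrict_space_iff)
qed

lemma borel_measurable_powr_height_deriv [measurable]:
  "(\<lambda>s. p * f s powr q * height_deriv s) \<in> borel_measurable borel"
proof -
  have "(\<lambda>s. p * f s powr q * right_deriv s) \<in> borel_measurable (restrict_space borel {0<..<1})"
    using borel_measurable_on_Ioo by measurable
  moreover have "(\<lambda>s. p * f s powr q * height_deriv s) = (\<lambda>s. indicator {0<..<1} s * (p * f s powr q * right_deriv s))"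
    by (simp add: fun_eq_iff height_deriv_def)
  ultimately show ?thesis
    by (simp add: borel_measurable_restrict_space_iff)
qed

lemma has_integral_height_deriv:
  assumes "0 < u" "u \<le> v" "v < 1"
  shows "(height_deriv has_integral f v - f u) {u..v}"
  using has_integral_right_deriv[OF assms]
  by (subst has_integral_cong[where g = right_deriv]) (use assms in \<open>auto simp: height_deriv_def\<close>)

lemma has_integral_powr_height_deriv:
  assumes "1 \<le> p" "0 < u" "u \<le> v" "v < 1"
  shows "((\<lambda>s. p * f s powr (p - 1) * height_deriv s) has_integral f v powr p - f u powr p) {u..v}"
proof -
  have "((\<lambda>s. p * f s powr (p - 1) * right_deriv s) has_integral f v powr p - f u powr p) {u..v}"
  proof (rule has_integral_of_increment_bounds[OF \<open>u \<le> v\<close>])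
    fix s t assume st: "u \<le> s" "s \<le> t" "t \<le> v"
    then have "f s \<le> f t" "0 < f s"
      using assms by (auto intro!: monotone_onD[OF mono_on_Ioo] pos)
    then have powr: "p * f s powr (p - 1) * (f t - f s) \<le> f t powr p - f s powr p"
      "f t powr p - f s powr p \<le> p * f t powr (p - 1) * (f t - f s)"
      using powr_increment_bounds \<open>1 \<le> p\<close> by blast+
    have incr: "right_deriv s * (t - s) \<le> f t - f s" "f t - f s \<le> right_deriv t * (t - s)"
      using increment_bounds[of s t] st assms by auto
    have "p * f s powr (p - 1) * right_deriv s * (t - s) \<le> p * f s powr (p - 1) * (f t - f s)"
      unfolding mult.assoc[of _ _ "t - s"] using incr(1) \<open>1 \<le> p\<close> by (intro mult_left_mono) auto
    moreover have "p * f t powr (p - 1) * (f t - f s) \<le> p * f t powr (p - 1) * right_deriv t * (t - s)"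
      unfolding mult.assoc[of _ _ "t - s"] using incr(2) \<open>1 \<le> p\<close> by (intro mult_left_mono) auto
    ultimately show "p * f s powr (p - 1) * right_deriv s * (t - s) \<le> f t powr p - f s powr p
        \<and> f t powr p - f s powr p \<le> p * f t powr (p - 1) * right_deriv t * (t - s)"
      using powr by linarith
  qed
  then show ?thesis
    by (subst has_integral_cong[where g = "\<lambda>s. p * f s powr (p - 1) * right_deriv s"])
      (use assms in \<open>auto simp: height_deriv_def\<close>)
qed

lemma tendsto_at_left_SUP:
  assumes "0 < \<sigma>" "\<sigma> \<le> 1"
  shows "(f \<longlongrightarrow> (SUP s\<in>{0<..<\<sigma>}. f s)) (at_left \<sigma>)" and "0 < (SUP s\<in>{0<..<\<sigma>}. f s)"
proof -
  have bdd_\<sigma>: "bdd_above (f ` {0<..<\<sigma>})"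
    by (rule bdd_above_mono[OF bdd]) (use assms in auto)
  show "(f \<longlongrightarrow> (SUP s\<in>{0<..<\<sigma>}. f s)) (at_left \<sigma>)"
    using assms by (intro tendsto_at_left_SUP_mono_on bdd_\<sigma> mono_on_subset[OF mono_on_Ioo]) auto
  have "0 < f (\<sigma> / 2)"
    using assms by (intro pos) auto
  also have "\<dots> \<le> (SUP s\<in>{0<..<\<sigma>}. f s)"
    using assms by (intro cSUP_upper bdd_\<sigma>) auto
  finally show "0 < (SUP s\<in>{0<..<\<sigma>}. f s)" .
qed

lemma nn_integral_height_deriv_Ioo:
  assumes "0 < \<sigma>" "\<sigma> \<le> 1"
  shows "(\<integral>\<^sup>+s. ennreal (height_deriv s) * indicator {0<..<\<sigma>} s \<partial>lborel) = ennreal (SUP s\<in>{0<..<\<sigma>}. f s)"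
  using nn_integral_Ioo_FTC[OF \<open>0 < \<sigma>\<close> _ height_deriv_nonneg _ tendsto_0 tendsto_at_left_SUP(1)[OF assms]]
    has_integral_height_deriv assms
  by (simp add: measurable_restrict_space1)

lemma nn_integral_powr_height_deriv_Ioo:
  assumes "1 \<le> p" "0 < \<sigma>" "\<sigma> \<le> 1"
  shows "(\<integral>\<^sup>+s. ennreal (p * f s powr (p - 1) * height_deriv s) * indicator {0<..<\<sigma>} s \<partial>lborel)
    = ennreal ((SUP s\<in>{0<..<\<sigma>}. f s) powr p)"
proof (rule nn_integral_Ioo_FTC[where F = "\<lambda>s. f s powr p" and A = 0, OF \<open>0 < \<sigma>\<close>, simplified])
  show "((\<lambda>s. p * f s powr (p - 1) * height_deriv s) has_integral f v powr p - f u powr p) {u..v}"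
    if "0 < u" "u \<le> v" "v < \<sigma>" for u v
    using that assms by (intro has_integral_powr_height_deriv) auto
  have "\<forall>\<^sub>F s in at_right 0. s \<in> {0<..<1::real}"
    by (rule eventually_at_right_real) simp
  then have "\<forall>\<^sub>F s in at_right 0. 0 \<le> f s"
    by eventually_elim (auto intro: less_imp_le pos)
  then show "((\<lambda>s. f s powr p) \<longlongrightarrow> 0) (at_right 0)"
    using \<open>1 \<le> p\<close> by (intro tendsto_zero_powrI tendsto_0 tendsto_const) auto
  show "((\<lambda>s. f s powr p) \<longlongrightarrow> (SUP s\<in>{0<..<\<sigma>}. f s) powr p) (at_left \<sigma>)"
    using tendsto_at_left_SUP[OF \<open>0 < \<sigma>\<close> \<open>\<sigma> \<le> 1\<close>] by (intro tendsto_powr tendsto_const) auto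
qed (use \<open>1 \<le> p\<close> height_deriv_nonneg in \<open>auto intro: measurable_restrict_space1\<close>)

text \<open>Since the superlevel sets of an antitone radius are intervals \<open>(0, \<sigma>)\<close>, the layer-cake
  integral of \<open>f'\<close> over them is \<open>f(\<sigma>-)\<close>, and that of \<open>(f\<^sup>p)'\<close> is \<open>f(\<sigma>-)\<^sup>p\<close>.\<close>

lemma layer_cake_powr:
  fixes R :: "real \<Rightarrow> real"
  assumes "1 \<le> p" "0 \<le> \<nu>"
    and R_meas [measurable]: "R \<in> borel_measurable borel"
    and R_antimono: "antimono_on {0<..<1} R"
    and R_outside: "\<And>s. s \<notin> {0<..<1} \<Longrightarrow> R s = 0"
  shows "ennreal ((\<integral>s. (if \<nu> < R s then height_deriv s else 0) \<partial>lborel) powr p)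
    = (\<integral>\<^sup>+s. ennreal (if \<nu> < R s then p * f s powr (p - 1) * height_deriv s else 0) \<partial>lborel)"
proof -
  obtain \<sigma> where \<sigma>: "0 \<le> \<sigma>" "\<sigma> \<le> 1" "\<And>s. s \<noteq> \<sigma> \<Longrightarrow> \<nu> < R s \<longleftrightarrow> s \<in> {0<..<\<sigma>}"
  proof (rule superlevel_set_antimono_on[OF _ R_antimono])
    show "R s \<le> \<nu>" if "s \<notin> {0<..<1}" for s
      using R_outside[OF that] \<open>0 \<le> \<nu>\<close> by simp
  qed (use that in auto)
  have AE_superlevel: "AE s in lborel. \<nu> < R s \<longleftrightarrow> s \<in> {0<..<\<sigma>}"
    using AE_lborel_singleton[of \<sigma>] by eventually_elim (use \<sigma> in blast)
  have "(\<integral>s. (if \<nu> < R s then height_deriv s else 0) \<partial>lborel)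
      = enn2real (\<integral>\<^sup>+s. ennreal (if \<nu> < R s then height_deriv s else 0) \<partial>lborel)"
    by (rule integral_eq_nn_integral) (auto simp: height_deriv_nonneg)
  also have "(\<integral>\<^sup>+s. ennreal (if \<nu> < R s then height_deriv s else 0) \<partial>lborel)
      = (\<integral>\<^sup>+s. ennreal (height_deriv s) * indicator {0<..<\<sigma>} s \<partial>lborel)"
    by (rule nn_integral_cong_AE) (use AE_superlevel in \<open>eventually_elim, auto\<close>)
  finally have lhs: "(\<integral>s. (if \<nu> < R s then height_deriv s else 0) \<partial>lborel)
      = enn2real (\<integral>\<^sup>+s. ennreal (height_deriv s) * indicator {0<..<\<sigma>} s \<partial>lborel)" .
  have rhs: "(\<integral>\<^sup>+s. ennreal (if \<nu> < R s then p * f s powr (p - 1) * height_deriv s else 0) \<partial>lborel)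
      = (\<integral>\<^sup>+s. ennreal (p * f s powr (p - 1) * height_deriv s) * indicator {0<..<\<sigma>} s \<partial>lborel)"
    by (rule nn_integral_cong_AE) (use AE_superlevel in \<open>eventually_elim, auto\<close>)
  show ?thesis
  proof (cases "\<sigma> = 0")
    case False
    with \<sigma> have "0 < \<sigma>" by simp
    then show ?thesis
      unfolding lhs rhs using \<sigma> \<open>1 \<le> p\<close> tendsto_at_left_SUP(2)[of \<sigma>]
      by (simp add: nn_integral_height_deriv_Ioo nn_integral_powr_height_deriv_Ioo)
  qed (simp add: lhs rhs)
qed

lemma density_of_height_eq:
  fixes x :: "'a::euclidean_space"
  shows "density_of_height f x =
    (\<integral>s. (if norm x < unit_mass_radius TYPE('a) (height_deriv s) then height_deriv s else 0) \<partial>lborel)"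
proof -
  define g where "g s = (if norm x < unit_mass_radius TYPE('a) (height_deriv s) then height_deriv s else 0)" for s
  define g' where "g' s = indicator {0<..<1} s *\<^sub>R
    (indicator (ball 0 (unit_mass_radius TYPE('a) (deriv f s))) x * deriv f s)" for s
  have eq: "g' s = g s" if "s \<notin> kinks" for s
  proof (cases "s \<in> {0<..<1}")
    case True
    with that have "deriv f s = height_deriv s"
      by (simp add: deriv_eq_right_deriv height_deriv_def)
    with True show ?thesis
      by (simp add: g_def g'_def indicator_def)
  next
    case False
    then show ?thesis
      by (simp add: g_def g'_def height_deriv_def)
  qed
  have "g \<in> borel_measurable lborel"
    unfolding g_def by measurable
  moreover have "g' \<in> borel_measurable lborel"
    by (rule measurable_discrete_difference[OF \<open>g \<in> _\<close> countable_kinks]) (use eq in auto)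
  moreover have "AE s in lborel. g' s = g s"
    using AE_not_in[OF countable_imp_null_set_lborel[OF countable_kinks]] by eventually_elim (rule eq)
  ultimately have "(\<integral>s. g' s \<partial>lborel) = (\<integral>s. g s \<partial>lborel)"
    by (intro integral_cong_AE)
  then show ?thesis
    by (simp add: density_of_height_def set_lebesgue_integral_def g_def g'_def)
qed

lemma borel_measurable_density_of_height [measurable]:
  "density_of_height f \<in> borel_measurable (lborel :: 'a::euclidean_space measure)"
proof -
  have "density_of_height f = (\<lambda>x::'a.
      \<integral>s. (if norm x < unit_mass_radius TYPE('a) (height_deriv s) then height_deriv s else 0) \<partial>lborel)"
    by (simp add: fun_eq_iff density_of_height_eq)
  then show ?thesis
    by simp
qed

lemma nn_integral_ball_height_deriv:
  assumes "0 \<le> p"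
  shows "(\<integral>\<^sup>+x. ennreal (if norm (x::'a::euclidean_space) < unit_mass_radius TYPE('a) (height_deriv s)
      then p * f s powr (p - 1) * height_deriv s else 0) \<partial>lborel)
    = ennreal (p * (indicator {0<..<1} s * f s powr (p - 1)))"
proof (cases "s \<in> {0<..<1}")
  case True
  then have "0 < height_deriv s"
    by (simp add: height_deriv_def right_deriv_pos)
  have "(\<integral>\<^sup>+x. ennreal (if norm (x::'a) < unit_mass_radius TYPE('a) (height_deriv s)
      then p * f s powr (p - 1) * height_deriv s else 0) \<partial>lborel)
    = ennreal (p * f s powr (p - 1) * height_deriv s) *
        emeasure lborel (ball (0::'a) (unit_mass_radius TYPE('a) (height_deriv s)))"
    by (subst nn_integral_cmult_indicator[symmetric]) (auto intro!: nn_integral_cong simp: indicator_def)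
  also have "\<dots> = ennreal (p * f s powr (p - 1) * height_deriv s * (1 / height_deriv s))"
    using \<open>0 < height_deriv s\<close> \<open>0 \<le> p\<close>
    by (simp add: emeasure_ball_unit_mass_radius ennreal_mult[symmetric])
  finally show ?thesis
    using True \<open>0 < height_deriv s\<close> by simp
next
  case False
  then have "p * f s powr (p - 1) * height_deriv s = 0"
    by (simp add: height_deriv_def)
  then show ?thesis
    using False by (simp only: if_cancel ennreal_0) simp
qed

lemma nn_integral_powr_density_of_height:
  assumes "1 \<le> p"
  shows "(\<integral>\<^sup>+x. ennreal (density_of_height f (x::'a::euclidean_space) powr p) \<partial>lborel)
    = (\<integral>\<^sup>+s. ennreal (p * (indicator {0<..<1} s * f s powr (p - 1))) \<partial>lborel)"
proof -
  define R where "R s = unit_mass_radius TYPE('a) (height_deriv s)" for s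
  have R_meas [measurable]: "R \<in> borel_measurable borel"
    unfolding R_def by measurable
  have R_antimono: "antimono_on {0<..<1} R"
    unfolding R_def
    by (intro monotone_onI unit_mass_radius_antimono)
      (auto simp: height_deriv_def right_deriv_pos intro: monotone_onD[OF right_deriv_mono])
  have layers: "ennreal (density_of_height f x powr p)
      = (\<integral>\<^sup>+s. ennreal (if norm x < R s then p * f s powr (p - 1) * height_deriv s else 0) \<partial>lborel)"
    for x :: 'a
    unfolding density_of_height_eq R_def[symmetric]
    by (rule layer_cake_powr[OF \<open>1 \<le> p\<close> norm_ge_zero R_meas R_antimono]) (simp add: R_def height_deriv_def)
  have "(\<integral>\<^sup>+x. ennreal (density_of_height f (x::'a) powr p) \<partial>lborel)
      = (\<integral>\<^sup>+x. \<integral>\<^sup>+s. ennreal (if norm (x::'a) < R s then p * f s powr (p - 1) * height_deriv s else 0)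
          \<partial>lborel \<partial>lborel)"
    by (simp add: layers)
  also have "\<dots> = (\<integral>\<^sup>+s. \<integral>\<^sup>+x. ennreal (if norm (x::'a) < R s then p * f s powr (p - 1) * height_deriv s else 0)
      \<partial>lborel \<partial>lborel)"
    by (rule lborel_pair.Fubini'[symmetric]) measurable
  also have "\<dots> = (\<integral>\<^sup>+s. ennreal (p * (indicator {0<..<1} s * f s powr (p - 1))) \<partial>lborel)"
    using \<open>1 \<le> p\<close> by (simp add: R_def nn_integral_ball_height_deriv)
  finally show ?thesis .
qed

lemma integral_powr_density_of_height:
  assumes "1 \<le> p"
  shows "(\<integral>x. density_of_height f (x::'a::euclidean_space) powr p \<partial>lebesgue)
    = p * (LINT s:{0<..<1}|lborel. f s powr (p - 1))"
proof -
  have "(\<integral>x. density_of_height f (x::'a) powr p \<partial>lebesgue)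
      = enn2real (\<integral>\<^sup>+x. ennreal (density_of_height f (x::'a) powr p) \<partial>lborel)"
    by (subst integral_eq_nn_integral) (auto intro: measurable_completion simp: nn_integral_completion)
  also have "\<dots> = (\<integral>s. p * (indicator {0<..<1} s * f s powr (p - 1)) \<partial>lborel)"
    unfolding nn_integral_powr_density_of_height[OF \<open>1 \<le> p\<close>]
    using \<open>1 \<le> p\<close> by (intro integral_eq_nn_integral[symmetric]) auto
  also have "\<dots> = p * (LINT s:{0<..<1}|lborel. f s powr (p - 1))"
    by (simp add: set_lebesgue_integral_def)
  finally show ?thesis .
qed

lemma S_functional_density_of_height:
  assumes "1 \<le> m"
  shows "S_functional m (density_of_height f :: 'a::euclidean_space \<Rightarrow> real)
    = m / (m - 1) * (LINT s:{0<..<1}|lborel. f s powr (m - 1))"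
  using integral_powr_density_of_height[OF assms, where 'a = 'a] by (simp add: S_functional_def)

lemma set_integrable_powr:
  assumes "0 \<le> q"
  shows "set_integrable lborel {0<..<1} (\<lambda>s. f s powr q)"
proof -
  obtain K where K: "\<And>s. s \<in> {0<..<1} \<Longrightarrow> f s \<le> K"
    using bdd unfolding bdd_above_def by blast
  have "integrable lborel (\<lambda>s::real. indicator {0<..<1} s * K powr q)"
    by (intro integrable_mult_left integrable_real_indicator) (simp_all add: emeasure_lborel_Ioo)
  moreover have "(\<lambda>s. indicator {0<..<1} s *\<^sub>R f s powr q) \<in> borel_measurable lborel"
    using borel_measurable_indicator_powr by simp
  moreover have "AE s in lborel. norm (indicator {0<..<1} s *\<^sub>R f s powr q) \<le> norm (indicator {0<..<1} s * K powr q)"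
    using K pos \<open>0 \<le> q\<close> by (intro AE_I2) (auto simp: indicator_def intro: powr_mono2 less_imp_le)
  ultimately show ?thesis
    unfolding set_integrable_def by (rule Bochner_Integration.integrable_bound)
qed

end

lemma height_profile_convex_combination:
  assumes "height_profile f" "height_profile g" "0 \<le> t" "t \<le> 1"
  shows "height_profile (\<lambda>s. (1 - t) * f s + t * g s)"
proof -
  interpret F: height_profile f by fact
  interpret G: height_profile g by fact
  obtain Kf Kg where "\<And>s. s \<in> {0<..<1} \<Longrightarrow> f s \<le> Kf" "\<And>s. s \<in> {0<..<1} \<Longrightarrow> g s \<le> Kg"
    using F.bdd G.bdd unfolding bdd_above_def by blast
  then have "(1 - t) * f s + t * g s \<le> (1 - t) * Kf + t * Kg" if "s \<in> {0<..<1}" for s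
    using that \<open>0 \<le> t\<close> \<open>t \<le> 1\<close> by (intro add_mono mult_left_mono) auto
  then have "bdd_above ((\<lambda>s. (1 - t) * f s + t * g s) ` {0<..<1})"
    by (rule bdd_aboveI2)
  moreover have "strict_mono_on {0<..<1} (\<lambda>s. (1 - t) * f s + t * g s)"
    using assms(3,4) by (intro strict_mono_onI convex_comb_strict_mono strict_mono_onD[OF F.strict_mono]
      strict_mono_onD[OF G.strict_mono])
  moreover have "(1 - t) * 0 + t * 0 < (1 - t) * f s + t * g s" if "0 < s" "s < 1" for s
    using that assms(3,4) by (intro convex_comb_strict_mono F.pos G.pos)
  moreover have "convex_on {0<..<1} (\<lambda>s. (1 - t) * f s + t * g s)"
    using F.convex G.convex assms(3,4) by (intro convex_on_add convex_on_cmul) auto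
  moreover have "((\<lambda>s. (1 - t) * f s + t * g s) \<longlongrightarrow> 0) (at_right 0)"
    using tendsto_add[OF tendsto_mult_left[OF F.tendsto_0, of "1 - t"] tendsto_mult_left[OF G.tendsto_0, of t]]
    by simp
  ultimately show ?thesis
    by unfold_locales simp_all
qed

lemma convex_on_integral_powr_convex_combination:
  assumes "height_profile f" "height_profile g" "1 \<le> q"
  shows "convex_on {0..1} (\<lambda>t. LINT s:{0<..<1}|lborel. ((1 - t) * f s + t * g s) powr q)"
  unfolding set_lebesgue_integral_def
proof (rule convex_on_integral)
  show "integrable lborel (\<lambda>s. indicator {0<..<1} s *\<^sub>R ((1 - t) * f s + t * g s) powr q)"
    if "t \<in> {0..1}" for t
    using height_profile.set_integrable_powr[OF height_profile_convex_combination[OF assms(1,2)]] that \<open>1 \<le> q\<close>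
    by (simp add: set_integrable_def)
  show "convex_on {0..1} (\<lambda>t. indicator {0<..<1} s *\<^sub>R ((1 - t) * f s + t * g s) powr q)" for s
  proof (cases "s \<in> {0<..<1}")
    case True
    then show ?thesis
      using \<open>1 \<le> q\<close> height_profile.pos[OF assms(1)] height_profile.pos[OF assms(2)]
      by (simp add: convex_on_powr_affine)
  qed (simp add: convex_on_const)
qed simp

section \<open>Height functions of bounded probability densities\<close>

locale height_function =
  fixes \<rho> :: "'a::euclidean_space \<Rightarrow> real" and h :: "real \<Rightarrow> real"
  assumes density: "prob_density_Linf \<rho>" and height: "is_height_function \<rho> h"
begin

definition truncated_mass :: "real \<Rightarrow> real"
  where "truncated_mass y = (\<integral>x. min (\<rho> x) y \<partial>lebesgue)"

lemma borel_measurable_density [measurable]: "\<rho> \<in> borel_measurable lebesgue"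
  and density_nonneg: "0 \<le> \<rho> x"
  and integrable_density: "integrable lebesgue \<rho>"
  and integral_density: "(\<integral>x. \<rho> x \<partial>lebesgue) = 1"
  using density by (simp_all add: prob_density_Linf_def)

lemma height_pos: "0 < s \<Longrightarrow> s < 1 \<Longrightarrow> 0 < h s"
  and height_less_Linf_norm: "0 < s \<Longrightarrow> s < 1 \<Longrightarrow> ereal (h s) < Linf_norm \<rho>"
  and truncated_mass_height: "0 < s \<Longrightarrow> s < 1 \<Longrightarrow> truncated_mass (h s) = s"
  using height by (simp_all add: is_height_function_def truncated_mass_def)

lemma integrable_min_density: "0 \<le> y \<Longrightarrow> integrable lebesgue (\<lambda>x. min (\<rho> x) y)"
  by (rule Bochner_Integration.integrable_bound[OF integrable_density]) (auto simp: density_nonneg)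

lemma truncated_mass_mono: "0 \<le> y \<Longrightarrow> y \<le> z \<Longrightarrow> truncated_mass y \<le> truncated_mass z"
  unfolding truncated_mass_def by (intro integral_mono integrable_min_density) auto

lemma truncated_mass_strict_mono:
  assumes "0 \<le> y" "y < z" and "ereal y < Linf_norm \<rho>"
  shows "truncated_mass y < truncated_mass z"
proof (rule ccontr)
  assume "\<not> truncated_mass y < truncated_mass z"
  moreover have "truncated_mass z - truncated_mass y = (\<integral>x. min (\<rho> x) z - min (\<rho> x) y \<partial>lebesgue)"
    unfolding truncated_mass_def using assms by (simp add: integrable_min_density)
  moreover have "0 \<le> (\<integral>x. min (\<rho> x) z - min (\<rho> x) y \<partial>lebesgue)"
    using assms by (intro integral_nonneg_AE) auto
  ultimately have "(\<integral>x. min (\<rho> x) z - min (\<rho> x) y \<partial>lebesgue) = 0"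
    by linarith
  then have "AE x in lebesgue. min (\<rho> x) z - min (\<rho> x) y = 0"
    using assms by (subst integral_nonneg_eq_0_iff_AE[symmetric]) (auto simp: integrable_min_density)
  then have "AE x in lebesgue. ereal \<bar>\<rho> x\<bar> \<le> ereal y"
    by eventually_elim (use assms density_nonneg in auto)
  then have "Linf_norm \<rho> \<le> ereal y"
    unfolding Linf_norm_def by (intro esssup_I) measurable
  with assms show False
    by simp
qed

lemma truncated_mass_concave: "concave_on {0..} truncated_mass"
  unfolding concave_on_iff
proof (intro conjI ballI allI impI)
  fix y z u v :: real
  assume yz: "y \<in> {0..}" "z \<in> {0..}" and uv: "0 \<le> u" "0 \<le> v" "u + v = 1"
  then have "u * truncated_mass y + v * truncated_mass z
      = (\<integral>x. u * min (\<rho> x) y + v * min (\<rho> x) z \<partial>lebesgue)"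
    by (simp add: truncated_mass_def integrable_min_density)
  also have "\<dots> \<le> truncated_mass (u *\<^sub>R y + v *\<^sub>R z)"
    unfolding truncated_mass_def real_scaleR_def using yz uv
    by (intro integral_mono convex_comb_min_le integrable_min_density) (auto simp: integrable_min_density)
  finally show "u * truncated_mass y + v * truncated_mass z \<le> truncated_mass (u *\<^sub>R y + v *\<^sub>R z)" .
qed simp

lemma height_strict_mono: "strict_mono_on {0<..<1} h"
proof (rule strict_mono_onI, rule ccontr)
  fix s t :: real assume st: "s \<in> {0<..<1}" "t \<in> {0<..<1}" "s < t" and "\<not> h s < h t"
  then have "truncated_mass (h t) \<le> truncated_mass (h s)"
    using height_pos by (intro truncated_mass_mono) (auto intro: less_imp_le)
  with st show False
    by (simp add: truncated_mass_height)
qed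

lemma height_convex: "convex_on {0<..<1} h"
proof (rule convex_onI)
  fix t s1 s2 :: real assume t: "0 < t" "t < 1" and s: "s1 \<in> {0<..<1}" "s2 \<in> {0<..<1}"
  define s where "s = (1 - t) *\<^sub>R s1 + t *\<^sub>R s2"
  define y where "y = (1 - t) * h s1 + t * h s2"
  have "s \<in> {0<..<1}"
    unfolding s_def using convexD[OF convex_real_interval(8) s, of "1 - t" t] t by auto
  have "0 < h s1" "0 < h s2"
    using s by (auto intro: height_pos)
  then have "0 \<le> y"
    unfolding y_def using t by (intro add_nonneg_nonneg mult_nonneg_nonneg) auto
  have "s = (1 - t) * truncated_mass (h s1) + t * truncated_mass (h s2)"
    using s by (simp add: s_def truncated_mass_height)
  also have "\<dots> \<le> truncated_mass y"
    unfolding y_def using concave_onD[OF truncated_mass_concave, of t "h s1" "h s2"] t s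
    by (auto simp: height_pos less_imp_le)
  finally have "s \<le> truncated_mass y" .
  show "h s \<le> y"
  proof (rule ccontr)
    assume "\<not> h s \<le> y"
    then have "ereal y < ereal (h s)"
      by simp
    also have "ereal (h s) < Linf_norm \<rho>"
      using \<open>s \<in> {0<..<1}\<close> by (simp add: height_less_Linf_norm)
    finally have "truncated_mass y < truncated_mass (h s)"
      using \<open>0 \<le> y\<close> \<open>\<not> h s \<le> y\<close> by (intro truncated_mass_strict_mono) auto
    with \<open>s \<le> truncated_mass y\<close> \<open>s \<in> {0<..<1}\<close> show False
      by (simp add: truncated_mass_height)
  qed
qed simp

lemma height_bdd_above: "bdd_above (h ` {0<..<1})"
proof -
  obtain M where "AE x in lebesgue. \<bar>\<rho> x\<bar> \<le> M"
    using density by (auto simp: prob_density_Linf_def)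
  then have "Linf_norm \<rho> \<le> ereal M"
    unfolding Linf_norm_def by (intro esssup_I) auto
  then have "h s \<le> M" if "s \<in> {0<..<1}" for s
    using height_less_Linf_norm[of s] that by (auto dest: order.strict_trans2)
  then show ?thesis
    by (rule bdd_aboveI2)
qed

lemma truncated_mass_pos:
  assumes "0 < y"
  shows "0 < truncated_mass y"
proof (rule ccontr)
  assume "\<not> 0 < truncated_mass y"
  moreover have "0 \<le> truncated_mass y"
    unfolding truncated_mass_def using assms by (intro integral_nonneg_AE) (auto simp: density_nonneg)
  ultimately have "(\<integral>x. min (\<rho> x) y \<partial>lebesgue) = 0"
    by (simp add: truncated_mass_def)
  then have "AE x in lebesgue. min (\<rho> x) y = 0"
    using assms by (subst integral_nonneg_eq_0_iff_AE[symmetric]) (auto simp: integrable_min_density density_nonneg)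
  then have "AE x in lebesgue. \<rho> x = 0"
    by eventually_elim (use assms in auto)
  then have "(\<integral>x. \<rho> x \<partial>lebesgue) = (\<integral>x. 0 \<partial>lebesgue)"
    using integral_cong_AE[OF borel_measurable_density, of "\<lambda>x. 0"] by simp
  with integral_density show False
    by simp
qed

lemma height_tendsto_0: "(h \<longlongrightarrow> 0) (at_right 0)"
proof (rule tendstoI)
  fix e :: real assume "0 < e"
  define d where "d = min (truncated_mass e) 1"
  have "0 < d"
    using truncated_mass_pos[OF \<open>0 < e\<close>] by (simp add: d_def)
  have "dist (h s) 0 < e" if "0 < s" "s < d" for s
  proof -
    have "h s < e"
    proof (rule ccontr)
      assume "\<not> h s < e"
      then have "truncated_mass e \<le> truncated_mass (h s)"
        using \<open>0 < e\<close> by (intro truncated_mass_mono) auto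
      with that show False
        by (simp add: d_def truncated_mass_height)
    qed
    with that show ?thesis
      using height_pos[of s] by (simp add: d_def)
  qed
  then show "\<forall>\<^sub>F s in at_right 0. dist (h s) 0 < e"
    using \<open>0 < d\<close> by (auto simp: eventually_at_right_field)
qed

end

sublocale height_function \<subseteq> height_profile h
  by unfold_locales
    (simp_all add: height_convex height_strict_mono height_pos height_bdd_above height_tendsto_0)

theorem proposition2p3:
  fixes \<rho>0 \<rho>1 :: "'a::euclidean_space \<Rightarrow> real"
    and h0 h1 :: "real \<Rightarrow> real"
    and m :: real
  assumes "prob_density_Linf \<rho>0" and "prob_density_Linf \<rho>1"
    and "radially_decreasing \<rho>0" and "radially_decreasing \<rho>1"
    and "is_height_function \<rho>0 h0" and "is_height_function \<rho>1 h1"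
    and "m \<ge> 2"
  shows "convex_on {0<..<1} (\<lambda>t. S_functional m (interp_curve h0 h1 t :: 'a \<Rightarrow> real))"
proof -
  interpret H0: height_function \<rho>0 h0 using assms(1,5) by unfold_locales
  interpret H1: height_function \<rho>1 h1 using assms(2,6) by unfold_locales
  note profiles = H0.height_profile_axioms H1.height_profile_axioms
  define I where "I t = (LINT s:{0<..<1}|lborel. ((1 - t) * h0 s + t * h1 s) powr (m - 1))" for t
  have S_eq: "S_functional m (interp_curve h0 h1 t :: 'a \<Rightarrow> real) = m / (m - 1) * I t"
    if "t \<in> {0<..<1}" for t
    using height_profile.S_functional_density_of_height[OF height_profile_convex_combination[OF profiles, of t],
        where 'a = 'a] that \<open>m \<ge> 2\<close>
    by (simp add: interp_curve_eq_density_of_height I_def)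
  have "convex_on {0<..<1} I"
    using convex_on_integral_powr_convex_combination[OF profiles, of "m - 1"] \<open>m \<ge> 2\<close>
    by (auto simp: I_def[abs_def] elim: convex_on_subset)
  then have "convex_on {0<..<1} (\<lambda>t. m / (m - 1) * I t)"
    using \<open>m \<ge> 2\<close> by (intro convex_on_cmul) auto
  moreover have "convex_on {0<..<1} (\<lambda>t. S_functional m (interp_curve h0 h1 t :: 'a \<Rightarrow> real))
      \<longleftrightarrow> convex_on {0<..<1} (\<lambda>t. m / (m - 1) * I t)"
    by (rule convex_on_cong) (rule S_eq)
  ultimately show ?thesis
    by simp
qed

end
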